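(* Let $G$ be a connected chordal graph and let $v\in V(G)$. For any $x,y\in N_G(v)$, the distance between $x$ and $y$ in $G-v$ equals the distance between $x$ and $y$ in the induced subgraph $G[N_G(v)]$.
   Context: Graphs are finite, simple, undirected. A graph is chordal if it has no induced cycle of length at least 4. $N_G(v)$ is the open neighborhood of $v$. Distances are lengths (number of edges) of shortest paths, infinite if no path exists. *)

theory Defs
  imports Main "HOL-Library.Extended_Nat"
begin

definition simple_graph :: "'a set \<Rightarrow> ('a \<Rightarrow> 'a \<Rightarrow> bool) \<Rightarrow> bool" where
  "simple_graph V E \<longleftrightarrow> finite V \<and> (\<forall>x y. E x y \<longrightarrow> x \<in> V \<and> y \<in> V)
     \<and> (\<forall>x y. E x y \<longrightarrow> E y x) \<and> (\<forall>x. \<not> E x x)"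

definition walk_in :: "'a set \<Rightarrow> ('a \<Rightarrow> 'a \<Rightarrow> bool) \<Rightarrow> 'a list \<Rightarrow> bool" where
  "walk_in S E xs \<longleftrightarrow> xs \<noteq> [] \<and> set xs \<subseteq> S
     \<and> (\<forall>i. i + 1 < length xs \<longrightarrow> E (xs ! i) (xs ! (i + 1)))"

text \<open>Distance in the induced subgraph on S (number of edges of a shortest walk);
  infinite if no walk exists.\<close>
definition dist_in :: "'a set \<Rightarrow> ('a \<Rightarrow> 'a \<Rightarrow> bool) \<Rightarrow> 'a \<Rightarrow> 'a \<Rightarrow> enat" where
  "dist_in S E x y =
     (INF xs \<in> {xs. walk_in S E xs \<and> hd xs = x \<and> last xs = y}. enat (length xs - 1))"

definition connected_graph :: "'a set \<Rightarrow> ('a \<Rightarrow> 'a \<Rightarrow> bool) \<Rightarrow> bool" where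
  "connected_graph V E \<longleftrightarrow>
     (\<forall>x\<in>V. \<forall>y\<in>V. \<exists>xs. walk_in V E xs \<and> hd xs = x \<and> last xs = y)"

definition induced_cycle :: "'a set \<Rightarrow> ('a \<Rightarrow> 'a \<Rightarrow> bool) \<Rightarrow> 'a list \<Rightarrow> bool" where
  "induced_cycle V E cs \<longleftrightarrow> length cs \<ge> 3 \<and> distinct cs \<and> set cs \<subseteq> V
     \<and> (\<forall>i < length cs. \<forall>j < length cs.
          E (cs ! i) (cs ! j) \<longleftrightarrow> (j = (i + 1) mod length cs \<or> i = (j + 1) mod length cs))"

definition chordal :: "'a set \<Rightarrow> ('a \<Rightarrow> 'a \<Rightarrow> bool) \<Rightarrow> bool" where
  "chordal V E \<longleftrightarrow> (\<forall>cs. induced_cycle V E cs \<longrightarrow> length cs < 4)"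

definition nbhd :: "('a \<Rightarrow> 'a \<Rightarrow> bool) \<Rightarrow> 'a \<Rightarrow> 'a set" where
  "nbhd E v = {u. E v u}"

end

theory Submission
  imports Defs
begin

text \<open>A shortest walk between two vertices of \<open>G - v\<close> is an induced path. If such a walk
  between two neighbours of \<open>v\<close> left \<open>N(v)\<close>, it would contain a segment \<open>x y\<^sub>1 \<dots> y\<^sub>k z\<close>
  with \<open>k \<ge> 1\<close>, \<open>x, z \<in> N(v)\<close> and no \<open>y\<^sub>i\<close> in \<open>N(v)\<close>; closing it up through \<open>v\<close> gives an
  induced cycle of length \<open>k + 3 \<ge> 4\<close>. Hence in a chordal graph shortest walks of \<open>G - v\<close>
  between neighbours of \<open>v\<close> stay inside \<open>N(v)\<close>, while the reverse inequality holds because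
  \<open>G[N(v)]\<close> is a subgraph of \<open>G - v\<close>.\<close>

definition shortest_walk :: "'a set \<Rightarrow> ('a \<Rightarrow> 'a \<Rightarrow> bool) \<Rightarrow> 'a list \<Rightarrow> bool" where
  "shortest_walk S E P \<longleftrightarrow> walk_in S E P \<and>
     (\<forall>Q. walk_in S E Q \<and> hd Q = hd P \<and> last Q = last P \<longrightarrow> length P \<le> length Q)"

definition induced_path :: "('a \<Rightarrow> 'a \<Rightarrow> bool) \<Rightarrow> 'a list \<Rightarrow> bool" where
  "induced_path E P \<longleftrightarrow> distinct P \<and>
     (\<forall>i < length P. \<forall>j < length P. E (P ! i) (P ! j) \<longleftrightarrow> j = i + 1 \<or> i = j + 1)"

lemma walk_in_iff_successively:
  "walk_in S E P \<longleftrightarrow> P \<noteq> [] \<and> set P \<subseteq> S \<and> successively E P"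
  by (simp add: walk_in_def successively_conv_nth)

lemma walk_in_mono: "S \<subseteq> T \<Longrightarrow> walk_in S E P \<Longrightarrow> walk_in T E P"
  unfolding walk_in_def by blast

lemma last_take_Suc: "a < length P \<Longrightarrow> last (take (Suc a) P) = P ! a"
  by (simp add: take_Suc_conv_app_nth)

lemma walk_in_take_drop:
  assumes "walk_in S E P" and "a < length P" and "c \<le> length P"
    and "c < length P \<Longrightarrow> E (P ! a) (P ! c)"
  shows "walk_in S E (take (Suc a) P @ drop c P)"
proof -
  have "successively E (take n P) \<and> successively E (drop n P)" for n
    using assms(1) successively_append_iff[of E "take n P" "drop n P"]
    by (simp add: walk_in_iff_successively)
  moreover have "last (take (Suc a) P) = P ! a"
    using assms(2) by (rule last_take_Suc)
  moreover have "set (take (Suc a) P @ drop c P) \<subseteq> set P"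
    by (auto dest: in_set_takeD in_set_dropD)
  moreover have "drop c P = [] \<or> E (P ! a) (hd (drop c P))"
    using assms(3,4) by (cases "c < length P") (simp_all add: hd_drop_conv_nth)
  ultimately show ?thesis
    using assms(1-3) by (auto simp: walk_in_iff_successively successively_append_iff)
qed

lemma shortest_walk_no_shortcut:
  assumes "shortest_walk S E P" and "a < length P" and "c \<le> length P"
    and "c < length P \<Longrightarrow> E (P ! a) (P ! c)" and "c = length P \<Longrightarrow> P ! a = last P"
  shows "c \<le> Suc a"
proof (rule ccontr)
  assume "\<not> c \<le> Suc a"
  let ?Q = "take (Suc a) P @ drop c P"
  have "walk_in S E ?Q"
    using assms(1) assms(2-4) by (auto simp: shortest_walk_def intro: walk_in_take_drop)
  moreover have "hd ?Q = hd P"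
    using assms(2) by (cases P) auto
  moreover have "last ?Q = last P"
    using assms(2,3,5) last_take_Suc[of a P] by (cases "c = length P") auto
  ultimately have "length P \<le> length ?Q"
    using assms(1) by (auto simp: shortest_walk_def)
  with \<open>\<not> c \<le> Suc a\<close> assms(2,3) show False by simp
qed

lemma shortest_walk_distinct:
  assumes "shortest_walk S E P"
  shows "distinct P"
proof (rule ccontr)
  assume "\<not> distinct P"
  then obtain a b where ab: "a < b" "b < length P" "P ! a = P ! b"
    by (metis distinct_conv_nth linorder_neqE_nat)
  have "walk_in S E P" using assms by (simp add: shortest_walk_def)
  then have "Suc b < length P \<Longrightarrow> E (P ! a) (P ! Suc b)"
    using ab(3) by (simp add: walk_in_def)
  moreover have "Suc b = length P \<Longrightarrow> P ! a = last P"
    using ab by (metis diff_Suc_1 last_conv_nth list.size(3) not_less_zero)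
  ultimately have "Suc b \<le> Suc a"
    using shortest_walk_no_shortcut[OF assms, of a "Suc b"] ab by simp
  with ab(1) show False by simp
qed

lemma shortest_walk_chordless:
  assumes "shortest_walk S E P" and "a < b" and "b < length P" and "E (P ! a) (P ! b)"
  shows "b = Suc a"
  using shortest_walk_no_shortcut[OF assms(1), of a b] assms(2-4) by simp

lemma shortest_walk_induced_path:
  assumes "symp E" and "irreflp E" and "shortest_walk S E P"
  shows "induced_path E P"
  unfolding induced_path_def
proof (intro conjI allI impI)
  show "distinct P" using assms(3) by (rule shortest_walk_distinct)
  have edge: "E (P ! i) (P ! Suc i)" if "Suc i < length P" for i
    using assms(3) that by (simp add: shortest_walk_def walk_in_def)
  fix i j assume "i < length P" "j < length P"
  then show "E (P ! i) (P ! j) \<longleftrightarrow> j = i + 1 \<or> i = j + 1"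
    using shortest_walk_chordless[OF assms(3), of i j] shortest_walk_chordless[OF assms(3), of j i]
      edge[of i] edge[of j] assms(1,2)
    by (cases i j rule: linorder_cases) (auto dest: sympD irreflpD)
qed

lemma induced_path_appendD:
  assumes "induced_path E (xs @ ys)"
  shows "induced_path E xs" and "induced_path E ys"
proof -
  have adj: "E ((xs @ ys) ! i) ((xs @ ys) ! j) \<longleftrightarrow> j = i + 1 \<or> i = j + 1"
    if "i < length (xs @ ys)" "j < length (xs @ ys)" for i j
    using assms that by (simp add: induced_path_def)
  show "induced_path E xs"
    unfolding induced_path_def
  proof (intro conjI allI impI)
    show "distinct xs" using assms by (simp add: induced_path_def)
    fix i j assume "i < length xs" "j < length xs"
    then show "E (xs ! i) (xs ! j) \<longleftrightarrow> j = i + 1 \<or> i = j + 1"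
      using adj[of i j] by (simp add: nth_append)
  qed
  show "induced_path E ys"
    unfolding induced_path_def
  proof (intro conjI allI impI)
    show "distinct ys" using assms by (simp add: induced_path_def)
    fix i j assume "i < length ys" "j < length ys"
    then show "E (ys ! i) (ys ! j) \<longleftrightarrow> j = i + 1 \<or> i = j + 1"
      using adj[of "length xs + i" "length xs + j"] by simp
  qed
qed

lemma induced_cycle_Cons:
  assumes "symp E" and "irreflp E" and "induced_path E q" and "v \<notin> set q"
    and "set (v # q) \<subseteq> V" and "2 \<le> length q"
    and v_adj: "\<And>a. a < length q \<Longrightarrow> E v (q ! a) \<longleftrightarrow> a = 0 \<or> a = length q - 1"
  shows "induced_cycle V E (v # q)"
  unfolding induced_cycle_def
proof (intro conjI allI impI)
  show "3 \<le> length (v # q)" "set (v # q) \<subseteq> V" using assms(5,6) by simp_all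
  show "distinct (v # q)" using assms(3,4) by (simp add: induced_path_def)
  let ?n = "length (v # q)"
  have succ: "(k + 1) mod ?n = (if k + 1 = ?n then 0 else k + 1)" if "k < ?n" for k
    using that by (cases "k + 1 = ?n") simp_all
  fix i j assume i: "i < ?n" and j: "j < ?n"
  have q_adj: "E (q ! a) (q ! b) \<longleftrightarrow> b = a + 1 \<or> a = b + 1"
    if "a < length q" "b < length q" for a b
    using assms(3) that by (simp add: induced_path_def)
  have v_adj': "E (q ! a) v \<longleftrightarrow> a = 0 \<or> a = length q - 1" if "a < length q" for a
    using v_adj[OF that] assms(1) by (metis sympD)
  have "E ((v # q) ! i) ((v # q) ! j) \<longleftrightarrow>
      j = (if i + 1 = ?n then 0 else i + 1) \<or> i = (if j + 1 = ?n then 0 else j + 1)"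
  proof (cases i; cases j)
    assume "i = 0" "j = 0"
    then show ?thesis using assms(2,6) by (auto dest: irreflpD)
  next
    fix b assume "i = 0" "j = Suc b"
    moreover have "b = length q - 1 \<longleftrightarrow> j + 1 = ?n" using \<open>j = Suc b\<close> j by auto
    ultimately show ?thesis using v_adj[of b] j assms(6) by (cases q) simp_all
  next
    fix a assume "i = Suc a" "j = 0"
    moreover have "a = length q - 1 \<longleftrightarrow> i + 1 = ?n" using \<open>i = Suc a\<close> i by auto
    ultimately show ?thesis using v_adj'[of a] i assms(6) by (cases q) simp_all
  next
    fix a b assume "i = Suc a" "j = Suc b"
    then show ?thesis using q_adj[of a b] i j by (cases q) auto
  qed
  then show "E ((v # q) ! i) ((v # q) ! j) \<longleftrightarrow> j = (i + 1) mod ?n \<or> i = (j + 1) mod ?n"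
    by (simp only: succ[OF i] succ[OF j])
qed

lemma chordal_induced_path_interior_neighbour:
  assumes "chordal V E" and "symp E" and "irreflp E"
    and "induced_path E (x # ys @ [z])" and "set (x # ys @ [z]) \<subseteq> V"
    and "v \<in> V" and "v \<notin> set (x # ys @ [z])" and "E v x" and "E v z" and "ys \<noteq> []"
  shows "\<exists>y \<in> set ys. E v y"
proof (rule ccontr)
  assume no_interior: "\<not> (\<exists>y \<in> set ys. E v y)"
  let ?q = "x # ys @ [z]"
  have "E v (?q ! a) \<longleftrightarrow> a = 0 \<or> a = length ?q - 1" if "a < length ?q" for a
  proof (cases "a = 0 \<or> a = length ?q - 1")
    case True
    then show ?thesis using assms(8,9) by (auto simp: nth_append)
  next
    case False
    then have "?q ! a \<in> set ys"
      using that by (cases a) (auto simp: nth_append)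
    then show ?thesis using no_interior False by blast
  qed
  then have "induced_cycle V E (v # ?q)"
    using assms(2-7,10) by (intro induced_cycle_Cons) auto
  then have "length (v # ?q) < 4" using assms(1) unfolding chordal_def by blast
  with assms(10) show False by (cases ys) auto
qed

lemma split_list_excursion:
  assumes "hd xs \<in> A" and "last xs \<in> A" and "\<not> set xs \<subseteq> A"
  obtains ps x ys z ss
  where "xs = ps @ x # ys @ z # ss" and "x \<in> A" and "z \<in> A" and "ys \<noteq> []" and "set ys \<inter> A = {}"
proof -
  obtain ps u rs where xs: "xs = ps @ u # rs" and "u \<notin> A" and ps: "set ps \<subseteq> A"
    using split_list_first_prop[of xs "\<lambda>y. y \<notin> A"] assms(3) by blast
  have "ps \<noteq> []" using assms(1) xs \<open>u \<notin> A\<close> by auto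
  have "rs \<noteq> []" using assms(2) xs \<open>u \<notin> A\<close> by auto
  then have "\<exists>y \<in> set rs. y \<in> A" using assms(2) xs by auto
  then obtain ws z ss where rs: "rs = ws @ z # ss" and "z \<in> A" and ws: "set ws \<inter> A = {}"
    using split_list_first_prop[of rs "\<lambda>y. y \<in> A"] by blast
  have "xs = butlast ps @ last ps # (u # ws) @ z # ss"
    using xs rs \<open>ps \<noteq> []\<close> by simp
  moreover have "last ps \<in> A" using ps \<open>ps \<noteq> []\<close> by auto
  ultimately show thesis using \<open>z \<in> A\<close> \<open>u \<notin> A\<close> ws
    by (intro that[of "butlast ps" "last ps" "u # ws" z ss]) auto
qed

lemma chordal_shortest_walk_in_nbhd:
  assumes "chordal V E" and "symp E" and "irreflp E" and "v \<in> V"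
    and "shortest_walk (V - {v}) E P" and "hd P \<in> nbhd E v" and "last P \<in> nbhd E v"
  shows "set P \<subseteq> nbhd E v"
proof (rule ccontr)
  assume "\<not> set P \<subseteq> nbhd E v"
  then obtain ps x ys z ss where "P = ps @ x # ys @ z # ss"
    and "x \<in> nbhd E v" "z \<in> nbhd E v" "ys \<noteq> []" and ys: "set ys \<inter> nbhd E v = {}"
    by (rule split_list_excursion[OF assms(6,7)])
  then have P: "P = ps @ (x # ys @ [z]) @ ss" by simp
  have "induced_path E P" using assms(2,3,5) by (rule shortest_walk_induced_path)
  then have "induced_path E ((x # ys @ [z]) @ ss)" unfolding P by (rule induced_path_appendD(2))
  then have "induced_path E (x # ys @ [z])" by (rule induced_path_appendD(1))
  moreover have "set (x # ys @ [z]) \<subseteq> V - {v}"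
    using assms(5) by (auto simp: P shortest_walk_def walk_in_def)
  ultimately have "\<exists>y \<in> set ys. E v y"
    using chordal_induced_path_interior_neighbour[OF assms(1-3), of x ys z v]
      \<open>x \<in> nbhd E v\<close> \<open>z \<in> nbhd E v\<close> \<open>ys \<noteq> []\<close> assms(4)
    by (auto simp: nbhd_def)
  with ys show False by (auto simp: nbhd_def)
qed

lemma shortest_walk_exists:
  assumes "walk_in S E P"
  obtains Q where "shortest_walk S E Q" and "hd Q = hd P" and "last Q = last P"
    and "length Q \<le> length P"
proof -
  let ?W = "\<lambda>Q. walk_in S E Q \<and> hd Q = hd P \<and> last Q = last P"
  obtain Q where "?W Q" and "\<forall>R. ?W R \<longrightarrow> length Q \<le> length R"
    using ex_has_least_nat[of ?W P length] assms by blast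
  then show ?thesis by (intro that[of Q]) (auto simp: shortest_walk_def assms)
qed

lemma dist_in_le_walk:
  "walk_in S E P \<Longrightarrow> hd P = x \<Longrightarrow> last P = y \<Longrightarrow> dist_in S E x y \<le> enat (length P - 1)"
  unfolding dist_in_def by (rule INF_lower) simp

lemma dist_in_antimono: "S \<subseteq> T \<Longrightarrow> dist_in T E x y \<le> dist_in S E x y"
  unfolding dist_in_def by (rule INF_superset_mono) (auto intro: walk_in_mono)

lemma dist_in_eq_if_shortest_walks_within:
  assumes "T \<subseteq> S"
    and within: "\<And>P. shortest_walk S E P \<Longrightarrow> hd P = x \<Longrightarrow> last P = y \<Longrightarrow> set P \<subseteq> T"
  shows "dist_in S E x y = dist_in T E x y"
proof (rule antisym)
  show "dist_in S E x y \<le> dist_in T E x y" using assms(1) by (rule dist_in_antimono)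
  show "dist_in T E x y \<le> dist_in S E x y"
    unfolding dist_in_def[of S]
  proof (rule INF_greatest)
    fix P assume "P \<in> {P. walk_in S E P \<and> hd P = x \<and> last P = y}"
    then obtain Q where Q: "shortest_walk S E Q" "hd Q = x" "last Q = y"
      and "length Q \<le> length P"
      by (auto elim: shortest_walk_exists)
    have "walk_in T E Q"
      using Q within[OF Q] by (simp add: shortest_walk_def walk_in_def)
    then have "dist_in T E x y \<le> enat (length Q - 1)"
      using Q(2,3) by (rule dist_in_le_walk)
    also have "\<dots> \<le> enat (length P - 1)" using \<open>length Q \<le> length P\<close> by simp
    finally show "dist_in T E x y \<le> enat (length P - 1)" .
  qed
qed

theorem lemma5:
  fixes V :: "'a set" and E :: "'a \<Rightarrow> 'a \<Rightarrow> bool" and v x y :: 'a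
  assumes "simple_graph V E" and "connected_graph V E" and "chordal V E"
    and "v \<in> V" and "x \<in> nbhd E v" and "y \<in> nbhd E v"
  shows "dist_in (V - {v}) E x y = dist_in (nbhd E v) E x y"
proof -
  have "symp E" "irreflp E" "nbhd E v \<subseteq> V - {v}"
    using assms(1) by (auto simp: simple_graph_def nbhd_def symp_def irreflp_def)
  then show ?thesis
    using chordal_shortest_walk_in_nbhd[OF assms(3) _ _ assms(4)] assms(5,6)
    by (intro dist_in_eq_if_shortest_walks_within) auto
qed

end
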